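(* Let $\mu\in\mathcal M_{a,b,KN^{-1}}(\mathbb T^N)$ be a probability measure and let $B(k)$ be as defined below. For every permutation $(i_1,\dots,i_N)$ of $[1,N]$, every $k\in[1,N]$, $j\in[1,k-1]$, $x_{i_1},\dots,x_{i_{k-1}},x'_{i_j}\in\mathbb T$, and every $\psi\in L^1(\mathbb T^{N-k})$ with $\mathrm{Osc}\,\psi<\infty$, $$\int_{\mathbb T^{N-k}}\psi\,d\boldsymbol\Pi_{[i_{k+1},\dots,i_N]}\big[\mu_{(x_{i_1},\dots,x_{i_j},\dots,x_{i_{k-1}})}-\mu_{(x_{i_1},\dots,x'_{i_j},\dots,x_{i_{k-1}})}\big]\le 2B(k)\,\mathrm{Osc}\,\psi .$$
   Context: $\mathbb T=\mathbb R/\mathbb Z$. $\mu\in\mathcal M_{a,b,L}$ means: $\mu$ has density $\rho\in C^2(\mathbb T^N,(0,\infty))$, and for every $i$ the conditional densities $\rho_{\hat{\boldsymbol x}_i}(x)=\rho(x;\hat{\boldsymbol x}_i)/\int\rho(s;\hat{\boldsymbol x}_i)ds$ lie in $\mathcal V_a:=\{\psi\in C^2(\mathbb T,(0,\infty)):|(\log\psi)'|<a\}$ and satisfy $\theta_b(\rho_{\hat{\boldsymbol x}_i},\rho_{\hat{\boldsymbol x}'_i})\le L|x_j-x'_j|$ when $\hat{\boldsymbol x}_i,\hat{\boldsymbol x}'_i$ differ only in coordinate $j$, where $\theta_b(\psi_1,\psi_2)=\log\beta_b(\psi_1,\psi_2)+\log\beta_b(\psi_2,\psi_1)$, $\beta_b(\psi_1,\psi_2)=\inf\{t>0:t\psi_1-\psi_2\in\mathcal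 V_b\}$. $\mu_{(x_{i_1},\dots,x_{i_m})}$ is the conditional probability measure of $\mu$ on the torus of the remaining coordinates when coordinates $i_1,\dots,i_m$ are fixed to the given values; $\boldsymbol\Pi_{[i_{k+1},\dots,i_N]}$ is the marginal on coordinates $i_{k+1},\dots,i_N$. $\mathrm{Osc}_j\psi:=\sup\{|\psi(x_j;\hat{\boldsymbol x}_j)-\psi(x'_j;\hat{\boldsymbol x}_j)|\}$, $\mathrm{Osc}\,\psi:=\max_j\mathrm{Osc}_j\psi$, $\mathcal O_\alpha(\mathbb T^m):=\{\psi\in L^1:\mathrm{Osc}_j\psi\le\alpha\ \forall j\}$. $B(k):=\sup\int_{\mathbb T^{N-k}}\psi\,d[\mu_{(x_{i_1},\dots,x_{i_j},\dots,x_{i_k})}-\mu_{(x_{i_1},\dots,x'_{i_j},\dots,x_{i_k})}]$ over $j\in[1,k]$, $\psi\in\mathcal O_1(\mathbb T^{N-k})$, distinct $i_1,\dots,i_k$ and points $x_{i_1},\dots,x_{i_k},x'_{i_j}\in\mathbb T$. *)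

theory Defs
  imports "HOL-Probability.Probability_Measure"
begin

text \<open>The circle T = R/Z: functions on T are 1-periodic functions on the reals;
  points of T are represented by reals in [0,1); Lebesgue measure on T is
  Lebesgue measure on [0,1).\<close>

definition T_meas :: "real measure" where
  "T_meas = restrict_space lborel {0..<1}"

definition tdist :: "real \<Rightarrow> real \<Rightarrow> real" where
  "tdist s t = Inf {\<bar>s - t - real_of_int m\<bar> | m. True}"

definition C2 :: "('a::real_normed_vector \<Rightarrow> real) \<Rightarrow> bool" where
  "C2 f \<longleftrightarrow> (\<exists>(f' :: 'a \<Rightarrow> ('a \<Rightarrow>\<^sub>L real)) (f'' :: 'a \<Rightarrow> ('a \<Rightarrow>\<^sub>L ('a \<Rightarrow>\<^sub>L real))).
      (\<forall>x. (f has_derivative blinfun_apply (f' x)) (at x)) \<and>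
      (\<forall>x. (f' has_derivative blinfun_apply (f'' x)) (at x)) \<and>
      continuous_on UNIV f'')"

definition V :: "real \<Rightarrow> (real \<Rightarrow> real) set" where
  "V a = {\<psi>. (\<forall>t. \<psi> (t + 1) = \<psi> t) \<and> (\<forall>t. \<psi> t > 0) \<and> C2 \<psi> \<and>
              (\<forall>t. \<bar>deriv (\<lambda>s. ln (\<psi> s)) t\<bar> < a)}"

definition beta_set :: "real \<Rightarrow> (real \<Rightarrow> real) \<Rightarrow> (real \<Rightarrow> real) \<Rightarrow> real set" where
  "beta_set b \<psi>1 \<psi>2 = {t. t > 0 \<and> (\<lambda>s. t * \<psi>1 s - \<psi>2 s) \<in> V b}"

definition theta :: "real \<Rightarrow> (real \<Rightarrow> real) \<Rightarrow> (real \<Rightarrow> real) \<Rightarrow> ereal" where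
  "theta b \<psi>1 \<psi>2 =
     (if beta_set b \<psi>1 \<psi>2 \<noteq> {} \<and> beta_set b \<psi>2 \<psi>1 \<noteq> {}
      then ereal (ln (Inf (beta_set b \<psi>1 \<psi>2)) + ln (Inf (beta_set b \<psi>2 \<psi>1)))
      else \<infinity>)"

text \<open>Densities on T^N, N = CARD('n), as functions of all coordinates, 1-periodic in each.
  Conditional density of rho in coordinate i, other coordinates given by x.\<close>
definition condd :: "(('n \<Rightarrow> real) \<Rightarrow> real) \<Rightarrow> 'n \<Rightarrow> ('n \<Rightarrow> real) \<Rightarrow> real \<Rightarrow> real" where
  "condd \<rho> i x = (\<lambda>s. \<rho> (x(i := s)) / (\<integral>u. \<rho> (x(i := u)) \<partial>T_meas))"

text \<open>The class M_{a,b,L} (stated for the density rho of mu).\<close>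
definition M :: "real \<Rightarrow> real \<Rightarrow> real \<Rightarrow> (('n::finite \<Rightarrow> real) \<Rightarrow> real) set" where
  "M a b L = {\<rho>. (\<forall>x i. \<rho> (x(i := x i + 1)) = \<rho> x) \<and> (\<forall>x. \<rho> x > 0) \<and>
                 C2 (\<lambda>v::real^'n. \<rho> (vec_nth v)) \<and>
                 (\<forall>i x. condd \<rho> i x \<in> V a) \<and>
                 (\<forall>i j x t. j \<noteq> i \<longrightarrow>
                     theta b (condd \<rho> i x) (condd \<rho> i (x(j := t))) \<le> ereal (L * tdist (x j) t))}"

definition TP :: "'n set \<Rightarrow> ('n \<Rightarrow> real) measure" where
  "TP R = PiM R (\<lambda>_. T_meas)"

definition muT :: "(('n \<Rightarrow> real) \<Rightarrow> real) \<Rightarrow> ('n \<Rightarrow> real) measure" where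
  "muT \<rho> = density (TP UNIV) (\<lambda>y. ennreal (\<rho> y))"

text \<open>Conditional probability measure of mu on the torus of the coordinates outside F,
  when the coordinates in F are fixed to the values x i (i in F).\<close>
definition cond :: "(('n \<Rightarrow> real) \<Rightarrow> real) \<Rightarrow> 'n set \<Rightarrow> ('n \<Rightarrow> real) \<Rightarrow> ('n \<Rightarrow> real) measure" where
  "cond \<rho> F x = density (TP (- F))
     (\<lambda>y. ennreal (\<rho> (merge F (- F) (x, y)) / (\<integral>z. \<rho> (merge F (- F) (x, z)) \<partial>TP (- F))))"

definition marg :: "'n set \<Rightarrow> ('n \<Rightarrow> real) measure \<Rightarrow> ('n \<Rightarrow> real) measure" where
  "marg R \<nu> = distr \<nu> (TP R) (\<lambda>y. restrict y R)"

definition Osc_j :: "'n set \<Rightarrow> 'n \<Rightarrow> (('n \<Rightarrow> real) \<Rightarrow> real) \<Rightarrow> ereal" where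
  "Osc_j R j \<psi> = Sup {ereal \<bar>\<psi> y - \<psi> (y(j := s))\<bar> | y s.
       y \<in> PiE R (\<lambda>_. {0..<1}) \<and> s \<in> {0..<1}}"

text \<open>Osc = max_j Osc_j (taken as 0 for the zero-dimensional torus).\<close>
definition Osc :: "'n set \<Rightarrow> (('n \<Rightarrow> real) \<Rightarrow> real) \<Rightarrow> ereal" where
  "Osc R \<psi> = Sup ({0} \<union> (\<lambda>j. Osc_j R j \<psi>) ` R)"

definition Ocl :: "real \<Rightarrow> 'n set \<Rightarrow> (('n \<Rightarrow> real) \<Rightarrow> real) set" where
  "Ocl \<alpha> R = {\<psi>. integrable (TP R) \<psi> \<and> (\<forall>j\<in>R. Osc_j R j \<psi> \<le> ereal \<alpha>)}"

text \<open>B(k): sup over sets F = {i_1..i_k} of k distinct indices, an index c = i_j in F,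
  points x_{i} (i in F) and x'_{i_j} in T, and psi in O_1(T^{N-k}).\<close>
definition B :: "(('n::finite \<Rightarrow> real) \<Rightarrow> real) \<Rightarrow> nat \<Rightarrow> ereal" where
  "B \<rho> k = Sup {ereal ((\<integral>y. \<psi> y \<partial>cond \<rho> F x) - (\<integral>y. \<psi> y \<partial>cond \<rho> F (x(c := t))))
       | F c x t \<psi>. card F = k \<and> c \<in> F \<and> (\<forall>i\<in>F. x i \<in> {0..<1}) \<and> t \<in> {0..<1} \<and>
                    \<psi> \<in> Ocl 1 (- F)}"

end

theory Submission
  imports Defs "HOL-Probability.Probability"
begin

text \<open>Put c = i_k and R = {i_(k+1), ..., i_N}. By Fubini, integrating out the coordinate c
  exhibits the marginal on R of the conditional measure with the first k - 1 coordinates fixed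
  as a mixture over s \<in> T of the conditionals with the first k coordinates fixed (c set to s),
  with weights proportional to their normalisers Z(s). Hence the integral of \<psi> against it is
  the Z-weighted average of the integrals A(s)/Z(s) of \<psi> against the components, and the difference of two such averages
  (for x and x' = x(i_j := t)) is at most the largest difference A(s)/Z(s) - A'(s')/Z'(s').
  Passing from (x, s) to (x', s') changes first the coordinate i_j and then c; each single
  change moves the integral by at most B(k) Osc \<psi>, since \<psi> / Osc \<psi> has all oscillations
  at most 1.\<close>

lemma prob_space_T_meas: "prob_space T_meas"
  unfolding T_meas_def by (rule prob_spaceI) (simp add: emeasure_restrict_space)

lemma space_T_meas: "space T_meas = {0..<1}"
  unfolding T_meas_def by (simp add: space_restrict_space)

lemma prob_space_TP: "prob_space (TP S)"
  unfolding TP_def by (rule prob_space_PiM) (rule prob_space_T_meas)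

lemma space_TP: "space (TP S) = PiE S (\<lambda>_. {0..<1})"
  unfolding TP_def by (simp add: space_PiM space_T_meas)

lemma borel_measurable_T_meas_id [measurable]: "(\<lambda>s. s) \<in> borel_measurable T_meas"
  unfolding T_meas_def by (rule measurable_restrict_space1) simp

lemma product_sigma_finite_T_meas: "product_sigma_finite (\<lambda>_. T_meas)"
  unfolding product_sigma_finite_def
  using prob_space_T_meas prob_space_imp_sigma_finite by blast

lemma borel_measurable_TP_component: "i \<in> S \<Longrightarrow> (\<lambda>z. z i) \<in> borel_measurable (TP S)"
  unfolding TP_def
  using measurable_compose[OF measurable_component_singleton[of i S] borel_measurable_T_meas_id] by simp

lemma integrable_bounded_prob:
  fixes f :: "'a \<Rightarrow> real"
  assumes "prob_space N" "f \<in> borel_measurable N" "\<And>x. x \<in> space N \<Longrightarrow> \<bar>f x\<bar> \<le> C"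
  shows "integrable N f"
proof -
  interpret prob_space N by fact
  show ?thesis using assms by (intro integrable_const_bound[where B = C]) auto
qed

lemma abs_integral_le_bound_prob:
  fixes f :: "'a \<Rightarrow> real"
  assumes "prob_space N" "f \<in> borel_measurable N" "\<And>x. x \<in> space N \<Longrightarrow> \<bar>f x\<bar> \<le> C"
  shows "\<bar>\<integral>x. f x \<partial>N\<bar> \<le> C"
proof -
  interpret prob_space N by fact
  have "\<bar>\<integral>x. f x \<partial>N\<bar> \<le> (\<integral>x. \<bar>f x\<bar> \<partial>N)" by (rule integral_abs_bound)
  also have "\<dots> \<le> C"
    using assms integrable_bounded_prob[OF assms] by (intro integral_le_const) auto
  finally show ?thesis .
qed

lemma abs_diff_le_Osc:
  assumes "j \<in> R" "y \<in> PiE R (\<lambda>_. {0..<1})" "s \<in> {0..<1}"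
  shows "ereal \<bar>\<psi> y - \<psi> (y(j := s))\<bar> \<le> Osc R \<psi>"
proof -
  have "ereal \<bar>\<psi> y - \<psi> (y(j := s))\<bar> \<le> Osc_j R j \<psi>"
    unfolding Osc_j_def using assms by (intro Sup_upper) blast
  also have "\<dots> \<le> Osc R \<psi>"
    unfolding Osc_def using assms(1) by (intro Sup_upper) blast
  finally show ?thesis .
qed

lemma Osc_nonneg: "0 \<le> Osc R \<psi>"
  unfolding Osc_def by (intro Sup_upper) blast

lemma abs_diff_le_card_Osc:
  fixes \<psi> :: "('a \<Rightarrow> real) \<Rightarrow> real"
  assumes osc: "Osc R \<psi> = ereal \<omega>" and R: "finite R"
    and y: "y \<in> PiE R (\<lambda>_. {0..<1})" and y0: "y0 \<in> PiE R (\<lambda>_. {0..<1})"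
  shows "\<bar>\<psi> y - \<psi> y0\<bar> \<le> real (card R) * \<omega>"
proof -
  have "\<bar>\<psi> y - \<psi> (\<lambda>i. if i \<in> S then y0 i else y i)\<bar> \<le> real (card S) * \<omega>"
    if "S \<subseteq> R" "y \<in> PiE R (\<lambda>_. {0..<1})" for S y
    using finite_subset[OF that(1) R] that
  proof (induction S arbitrary: y rule: finite_induct)
    case empty
    then show ?case by simp
  next
    case (insert a S)
    define w where "w i = (if i \<in> S then y0 i else y i)" for i
    have w: "w \<in> PiE R (\<lambda>_. {0..<1})"
      using insert.prems y0 unfolding w_def by (auto simp: PiE_iff extensional_def)
    have "\<bar>\<psi> y - \<psi> w\<bar> \<le> real (card S) * \<omega>"
      unfolding w_def using insert by blast
    moreover have "\<bar>\<psi> w - \<psi> (w(a := y0 a))\<bar> \<le> \<omega>"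
      using abs_diff_le_Osc[OF _ w, of a "y0 a" \<psi>] insert.prems y0 osc by (auto simp: PiE_iff)
    moreover have "(\<lambda>i. if i \<in> insert a S then y0 i else y i) = w(a := y0 a)"
      unfolding w_def by auto
    ultimately show ?case using insert by (simp add: algebra_simps)
  qed
  moreover have "(\<lambda>i. if i \<in> R then y0 i else y i) = y0"
    using y y0 by (auto simp: PiE_def extensional_def)
  ultimately show ?thesis using y by (metis order_refl)
qed

lemma divide_Osc_in_Ocl:
  assumes g: "integrable (TP R) g" and osc: "Osc R g = ereal \<omega>" and \<omega>: "0 < \<omega>"
  shows "(\<lambda>z. g z / \<omega>) \<in> Ocl 1 R"
  unfolding Ocl_def
proof (intro CollectI conjI ballI)
  show "integrable (TP R) (\<lambda>z. g z / \<omega>)" using g by simp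
  fix i assume i: "i \<in> R"
  show "Osc_j R i (\<lambda>z. g z / \<omega>) \<le> ereal 1"
    unfolding Osc_j_def
  proof (rule Sup_least, clarify)
    fix y :: "'a \<Rightarrow> real" and t :: real
    assume "y \<in> PiE R (\<lambda>_. {0..<1})" "t \<in> {0..<1}"
    then have "\<bar>g y - g (y(i := t))\<bar> \<le> \<omega>" using abs_diff_le_Osc[OF i, of y t g] osc by simp
    then show "ereal \<bar>g y / \<omega> - g (y(i := t)) / \<omega>\<bar> \<le> ereal 1"
      using \<omega> by (simp add: diff_divide_distrib[symmetric])
  qed
qed

lemma integral_ratio_diff_le:
  fixes A Z A' Z' :: "'a \<Rightarrow> real"
  assumes "integrable N A" "integrable N Z" "integrable N A'" "integrable N Z'"
    and Z_pos: "\<And>s. s \<in> space N \<Longrightarrow> 0 < Z s" and Z'_pos: "\<And>s. s \<in> space N \<Longrightarrow> 0 < Z' s"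
    and "0 < (\<integral>s. Z s \<partial>N)" "0 < (\<integral>s. Z' s \<partial>N)"
    and across: "\<And>s. s \<in> space N \<Longrightarrow> A s / Z s - A' s / Z' s \<le> \<beta>"
    and within: "\<And>s s'. s \<in> space N \<Longrightarrow> s' \<in> space N \<Longrightarrow> A' s / Z' s - A' s' / Z' s' \<le> \<beta>"
  shows "(\<integral>s. A s \<partial>N) / (\<integral>s. Z s \<partial>N) - (\<integral>s. A' s \<partial>N) / (\<integral>s. Z' s \<partial>N) \<le> 2 * \<beta>"
proof -
  define q where "q = (\<integral>s. A s \<partial>N) / (\<integral>s. Z s \<partial>N) - 2 * \<beta>"
  have "q * Z' s' \<le> A' s'" if s': "s' \<in> space N" for s'
  proof -
    let ?c = "A' s' / Z' s' + 2 * \<beta>"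
    have "A s \<le> ?c * Z s" if s: "s \<in> space N" for s
    proof -
      have "A s / Z s \<le> ?c" using across[OF s] within[OF s s'] by linarith
      then show ?thesis using Z_pos[OF s] by (simp add: pos_divide_le_eq)
    qed
    then have "(\<integral>s. A s \<partial>N) \<le> ?c * (\<integral>s. Z s \<partial>N)"
      using assms by (subst integral_mult_right_zero[symmetric]) (intro integral_mono; auto)
    then have "(\<integral>s. A s \<partial>N) / (\<integral>s. Z s \<partial>N) \<le> ?c"
      using assms(7) by (simp add: pos_divide_le_eq)
    then have "q \<le> A' s' / Z' s'" unfolding q_def by linarith
    then show ?thesis using Z'_pos[OF s'] by (simp add: le_divide_eq)
  qed
  then have "q * (\<integral>s. Z' s \<partial>N) \<le> (\<integral>s. A' s \<partial>N)"
    using assms by (subst integral_mult_right_zero[symmetric]) (intro integral_mono; auto)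
  then have "q \<le> (\<integral>s. A' s \<partial>N) / (\<integral>s. Z' s \<partial>N)" using assms(8) by (simp add: le_divide_eq)
  then show ?thesis unfolding q_def by linarith
qed

lemma bij_betw_split_at:
  assumes p: "bij_betw p {1..N} (UNIV :: 'a set)" and k: "1 \<le> k" "k \<le> N"
  shows "p k \<notin> p ` {1..k-1}"
    and "p ` {k+1..N} = - insert (p k) (p ` {1..k-1})"
    and "card (insert (p k) (p ` {1..k-1})) = k"
proof -
  have inj: "inj_on p {1..N}" and onto: "p ` {1..N} = UNIV"
    using p by (auto simp: bij_betw_def)
  have init: "{1..k} = insert k {1..k-1}" using k by auto
  show "p k \<notin> p ` {1..k-1}"
    using inj k by (subst inj_on_image_mem_iff[OF inj]) auto
  have "{k+1..N} = {1..N} - {1..k}" by auto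
  moreover have "p ` ({1..N} - {1..k}) = p ` {1..N} - p ` {1..k}"
    using k by (intro inj_on_image_set_diff[OF inj]) auto
  ultimately have "p ` {k+1..N} = p ` {1..N} - p ` {1..k}"
    by simp
  then have "p ` {k+1..N} = UNIV - p ` {1..k}"
    by (simp only: onto)
  then show "p ` {k+1..N} = - insert (p k) (p ` {1..k-1})"
    using init by (simp add: Compl_eq_Diff_UNIV)
  have "card (p ` {1..k}) = k"
    using inj k by (subst card_image) (auto intro: inj_on_subset)
  then show "card (insert (p k) (p ` {1..k-1})) = k" using init by simp
qed

lemma merge_in_unit_box:
  "\<forall>i\<in>F. x i \<in> {0..<1} \<Longrightarrow> z \<in> space (TP (- F)) \<Longrightarrow> \<forall>i. merge F (- F) (x, z) i \<in> {0..1}"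
  by (auto simp: merge_def space_TP PiE_iff less_imp_le)

lemma merge_insert_fold:
  assumes "c \<notin> F"
  shows "merge F (- F) (x, merge {c} (- insert c F) (u, z)) = merge (insert c F) (- insert c F) (x(c := u c), z)"
  using assms by (auto simp: merge_def fun_eq_iff)

definition fibre_integral ::
    "(('n \<Rightarrow> real) \<Rightarrow> real) \<Rightarrow> 'n set \<Rightarrow> ('n \<Rightarrow> real) \<Rightarrow> (('n \<Rightarrow> real) \<Rightarrow> real) \<Rightarrow> real" where
  "fibre_integral \<rho> F x g = (\<integral>z. g z * \<rho> (merge F (- F) (x, z)) \<partial>TP (- F))"

locale torus_density =
  fixes \<rho> :: "('n::finite \<Rightarrow> real) \<Rightarrow> real"
  assumes rho_pos: "\<And>y. 0 < \<rho> y"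
    and rho_C2: "C2 (\<lambda>v::real^'n. \<rho> (vec_nth v))"
begin

lemma continuous_on_rho_vec: "continuous_on UNIV (\<lambda>v::real^'n. \<rho> (vec_nth v))"
proof -
  obtain g' :: "(real^'n) \<Rightarrow> ((real^'n) \<Rightarrow>\<^sub>L real)"
    where "\<And>v. ((\<lambda>v. \<rho> (vec_nth v)) has_derivative blinfun_apply (g' v)) (at v)"
    using rho_C2 unfolding C2_def by blast
  then show ?thesis
    using has_derivative_continuous continuous_at_imp_continuous_on by blast
qed

lemma continuous_on_rho: "continuous_on UNIV \<rho>"
proof -
  have "continuous_on UNIV (\<lambda>y::'n \<Rightarrow> real. \<chi> i. y i)"
    by (intro continuous_on_vec_lambda continuous_on_product_coordinates)
  then have "continuous_on UNIV (\<lambda>y::'n \<Rightarrow> real. \<rho> (vec_nth (\<chi> i. y i)))"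
    using continuous_on_compose2[OF continuous_on_rho_vec] by blast
  moreover have "vec_nth (\<chi> i. y i) = y" for y :: "'n \<Rightarrow> real"
    by (rule ext) simp
  ultimately show ?thesis by simp
qed

lemma borel_measurable_rho_comp:
  assumes "\<And>i. (\<lambda>w. f w i) \<in> borel_measurable N"
  shows "(\<lambda>w. \<rho> (f w)) \<in> borel_measurable N"
proof -
  have "f \<in> borel_measurable N" by (rule measurable_coordinatewise_then_product) (rule assms)
  moreover have "\<rho> \<in> borel_measurable borel"
    using continuous_on_rho by (rule borel_measurable_continuous_onI)
  ultimately show ?thesis using measurable_compose by blast
qed

lemma rho_unit_box_bounds:
  obtains m U where "0 < m" "\<And>y. (\<forall>i. y i \<in> {0..1}) \<Longrightarrow> m \<le> \<rho> y \<and> \<rho> y \<le> U"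
proof -
  let ?g = "\<lambda>v::real^'n. \<rho> (vec_nth v)"
  have g: "continuous_on (cbox 0 1) ?g"
    using continuous_on_rho_vec continuous_on_subset by blast
  have "(0::real^'n) \<in> cbox 0 1" by (simp add: mem_box_cart)
  then have ne: "cbox (0::real^'n) 1 \<noteq> {}" by blast
  obtain a where "\<And>v. v \<in> cbox 0 1 \<Longrightarrow> ?g a \<le> ?g v"
    using continuous_attains_inf[OF compact_cbox ne g] by blast
  moreover obtain b where "\<And>v. v \<in> cbox 0 1 \<Longrightarrow> ?g v \<le> ?g b"
    using continuous_attains_sup[OF compact_cbox ne g] by blast
  moreover have "(\<chi> i. y i) \<in> cbox 0 1" if "\<forall>i. y i \<in> {0..1}" for y :: "'n \<Rightarrow> real"
    using that by (simp add: mem_box_cart)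
  moreover have "vec_nth (\<chi> i. y i) = y" for y :: "'n \<Rightarrow> real"
    by (rule ext) simp
  ultimately show ?thesis using that[of "?g a" "?g b"] rho_pos by metis
qed

lemma borel_measurable_rho_merge:
  "(\<lambda>z. \<rho> (merge F (- F) (x, z))) \<in> borel_measurable (TP (- F))"
proof (rule borel_measurable_rho_comp)
  fix i
  show "(\<lambda>z. merge F (- F) (x, z) i) \<in> borel_measurable (TP (- F))"
    by (cases "i \<in> F") (auto simp: merge_def intro: borel_measurable_TP_component)
qed

lemma fibre_integrand_bounded:
  assumes x: "\<forall>i\<in>F. x i \<in> {0..<1}" and g: "g \<in> borel_measurable (TP (- F))"
    and g_bound: "\<And>z. z \<in> space (TP (- F)) \<Longrightarrow> \<bar>g z\<bar> \<le> C"
    and U: "\<And>y. (\<forall>i. y i \<in> {0..1}) \<Longrightarrow> \<rho> y \<le> U"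
  shows "integrable (TP (- F)) (\<lambda>z. g z * \<rho> (merge F (- F) (x, z)))"
    and "\<bar>fibre_integral \<rho> F x g\<bar> \<le> C * U"
proof -
  have bound: "\<bar>g z * \<rho> (merge F (- F) (x, z))\<bar> \<le> C * U" if "z \<in> space (TP (- F))" for z
  proof -
    have "\<rho> (merge F (- F) (x, z)) \<le> U" using U merge_in_unit_box[OF x that] by blast
    then show ?thesis
      using g_bound[OF that] rho_pos[of "merge F (- F) (x, z)"] unfolding abs_mult
      by (intro mult_mono) auto
  qed
  have "(\<lambda>z. g z * \<rho> (merge F (- F) (x, z))) \<in> borel_measurable (TP (- F))"
    using g borel_measurable_rho_merge by measurable
  then show "integrable (TP (- F)) (\<lambda>z. g z * \<rho> (merge F (- F) (x, z)))"
    and "\<bar>fibre_integral \<rho> F x g\<bar> \<le> C * U"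
    unfolding fibre_integral_def using bound
    by (auto intro: integrable_bounded_prob abs_integral_le_bound_prob prob_space_TP)
qed

lemma fibre_integral_one_pos:
  assumes x: "\<forall>i\<in>F. x i \<in> {0..<1}"
  shows "0 < fibre_integral \<rho> F x (\<lambda>_. 1)"
proof -
  obtain m U where m: "0 < m" and mU: "\<And>y. (\<forall>i. y i \<in> {0..1}) \<Longrightarrow> m \<le> \<rho> y \<and> \<rho> y \<le> U"
    using rho_unit_box_bounds by blast
  have "integrable (TP (- F)) (\<lambda>z. 1 * \<rho> (merge F (- F) (x, z)))"
    using mU by (intro fibre_integrand_bounded(1)[OF x, of _ 1 U]) auto
  then have "m \<le> fibre_integral \<rho> F x (\<lambda>_. 1)"
    unfolding fibre_integral_def using mU merge_in_unit_box[OF x]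
    by (intro prob_space.integral_ge_const[OF prob_space_TP] AE_I2) auto
  with m show ?thesis by simp
qed

lemma integral_cond:
  assumes g: "g \<in> borel_measurable (TP (- F))"
  shows "(\<integral>z. g z \<partial>cond \<rho> F x) = fibre_integral \<rho> F x g / fibre_integral \<rho> F x (\<lambda>_. 1)"
proof -
  let ?Z = "fibre_integral \<rho> F x (\<lambda>_. 1)"
  have Z: "?Z = (\<integral>z. \<rho> (merge F (- F) (x, z)) \<partial>TP (- F))"
    by (simp add: fibre_integral_def)
  have "0 \<le> ?Z"
    unfolding Z using rho_pos by (intro integral_nonneg_AE) (auto intro: less_imp_le)
  then have "(\<integral>z. g z \<partial>cond \<rho> F x)
      = (\<integral>z. (\<rho> (merge F (- F) (x, z)) / ?Z) *\<^sub>R g z \<partial>TP (- F))"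
    unfolding cond_def Z[symmetric] using g borel_measurable_rho_merge rho_pos
    by (intro integral_density) (auto intro!: AE_I2 divide_nonneg_nonneg simp: less_imp_le[OF rho_pos])
  also have "\<dots> = (\<integral>z. g z * \<rho> (merge F (- F) (x, z)) / ?Z \<partial>TP (- F))"
    by (simp add: mult.commute)
  also have "\<dots> = fibre_integral \<rho> F x g / ?Z"
    unfolding fibre_integral_def by (rule integral_divide_zero)
  finally show ?thesis .
qed

lemma integral_marg_cond:
  assumes R: "R \<subseteq> - F" and g: "g \<in> borel_measurable (TP R)"
  shows "(\<integral>z. g z \<partial>marg R (cond \<rho> F x))
    = fibre_integral \<rho> F x (\<lambda>y. g (restrict y R)) / fibre_integral \<rho> F x (\<lambda>_. 1)"
proof -
  have restrict: "(\<lambda>y. restrict y R) \<in> TP (- F) \<rightarrow>\<^sub>M TP R"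
    unfolding TP_def using R by (rule measurable_restrict_subset)
  have "(\<integral>z. g z \<partial>marg R (cond \<rho> F x)) = (\<integral>y. g (restrict y R) \<partial>cond \<rho> F x)"
    unfolding marg_def using restrict g by (intro integral_distr) (auto simp: cond_def)
  also have "\<dots> = fibre_integral \<rho> F x (\<lambda>y. g (restrict y R)) / fibre_integral \<rho> F x (\<lambda>_. 1)"
    using measurable_compose[OF restrict g] by (rule integral_cond)
  finally show ?thesis .
qed

lemma integral_cond_eq_const:
  assumes x: "\<forall>i\<in>F. x i \<in> {0..<1}" and g: "g \<in> borel_measurable (TP (- F))"
    and const: "\<And>z. z \<in> space (TP (- F)) \<Longrightarrow> g z = (a::real)"
  shows "(\<integral>z. g z \<partial>cond \<rho> F x) = a"
proof -
  have "fibre_integral \<rho> F x g = (\<integral>z. a * (1 * \<rho> (merge F (- F) (x, z))) \<partial>TP (- F))"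
    unfolding fibre_integral_def by (rule Bochner_Integration.integral_cong) (simp_all add: const)
  also have "\<dots> = a * fibre_integral \<rho> F x (\<lambda>_. 1)"
    unfolding fibre_integral_def by (rule integral_mult_right_zero)
  finally show ?thesis
    using integral_cond[OF g] fibre_integral_one_pos[OF x] by simp
qed

lemma integrable_fibre_integral_upd:
  assumes x: "\<forall>i\<in>F. x i \<in> {0..<1}"
    and g: "g \<in> borel_measurable (TP (- insert c F))"
    and g_bound: "\<And>z. z \<in> space (TP (- insert c F)) \<Longrightarrow> \<bar>g z\<bar> \<le> C"
  shows "integrable T_meas (\<lambda>s. fibre_integral \<rho> (insert c F) (x(c := s)) g)"
proof -
  interpret prob_space "TP (- insert c F)" by (rule prob_space_TP)
  let ?R = "- insert c F"
  obtain U where U: "\<And>y. (\<forall>i. y i \<in> {0..1}) \<Longrightarrow> \<rho> y \<le> U"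
    using rho_unit_box_bounds by metis
  have "(\<lambda>w. \<rho> (merge (insert c F) ?R (x(c := fst w), snd w))) \<in> borel_measurable (T_meas \<Otimes>\<^sub>M TP ?R)"
  proof (rule borel_measurable_rho_comp)
    fix i
    show "(\<lambda>w. merge (insert c F) ?R (x(c := fst w), snd w) i) \<in> borel_measurable (T_meas \<Otimes>\<^sub>M TP ?R)"
      using measurable_compose[OF measurable_fst borel_measurable_T_meas_id]
        measurable_compose[OF measurable_snd borel_measurable_TP_component[of i ?R]]
      by (cases "i = c"; cases "i \<in> F") (auto simp: merge_def)
  qed
  then have "(\<lambda>s. fibre_integral \<rho> (insert c F) (x(c := s)) g) \<in> borel_measurable T_meas"
    unfolding fibre_integral_def
    using g by (intro borel_measurable_lebesgue_integral) (simp add: case_prod_beta')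
  moreover have "\<bar>fibre_integral \<rho> (insert c F) (x(c := s)) g\<bar> \<le> C * U" if "s \<in> space T_meas" for s
    using x that by (intro fibre_integrand_bounded(2)[OF _ g g_bound U]) (auto simp: space_T_meas)
  ultimately show ?thesis
    by (rule integrable_bounded_prob[OF prob_space_T_meas])
qed

lemma fibre_integral_split:
  assumes c: "c \<notin> F" and x: "\<forall>i\<in>F. x i \<in> {0..<1}"
    and g: "g \<in> borel_measurable (TP (- insert c F))"
    and g_bound: "\<And>z. z \<in> space (TP (- insert c F)) \<Longrightarrow> \<bar>g z\<bar> \<le> C"
  shows "fibre_integral \<rho> F x (\<lambda>y. g (restrict y (- insert c F)))
           = (\<integral>s. fibre_integral \<rho> (insert c F) (x(c := s)) g \<partial>T_meas)"
proof -
  interpret product_sigma_finite "\<lambda>_. T_meas" by (rule product_sigma_finite_T_meas)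
  define R where "R = - insert c F"
  define h where "h s = fibre_integral \<rho> (insert c F) (x(c := s)) g" for s
  define f where "f y = g (restrict y R) * \<rho> (merge F (- F) (x, y))" for y
  obtain U where U: "\<And>y. (\<forall>i. y i \<in> {0..1}) \<Longrightarrow> \<rho> y \<le> U"
    using rho_unit_box_bounds by metis
  have "integrable (TP (- F)) f"
    unfolding f_def
  proof (rule fibre_integrand_bounded(1)[OF x _ _ U])
    show "(\<lambda>y. g (restrict y R)) \<in> borel_measurable (TP (- F))"
      using g measurable_restrict_subset[of R "- F" "\<lambda>_. T_meas"] unfolding TP_def R_def
      by (auto intro: measurable_compose)
    show "\<bar>g (restrict y R)\<bar> \<le> C" if "y \<in> space (TP (- F))" for y
      using that unfolding R_def by (intro g_bound) (auto simp: space_TP)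
  qed
  moreover have "- F = {c} \<union> R" "{c} \<inter> R = {}" using c unfolding R_def by auto
  ultimately have "fibre_integral \<rho> F x (\<lambda>y. g (restrict y R))
      = (\<integral>u. (\<integral>z. f (merge {c} R (u, z)) \<partial>TP R) \<partial>TP {c})"
    unfolding fibre_integral_def TP_def f_def[symmetric]
    using product_integral_fold[of "{c}" R f] by simp
  also have "\<dots> = (\<integral>u. h (u c) \<partial>TP {c})"
    unfolding h_def fibre_integral_def f_def R_def
    by (intro Bochner_Integration.integral_cong refl)
      (auto simp: merge_insert_fold[OF c] space_TP)
  also have "\<dots> = (\<integral>s. h s \<partial>T_meas)"
    unfolding TP_def h_def
    using integrable_fibre_integral_upd[OF x g g_bound]
    by (intro product_integral_singleton) (rule borel_measurable_integrable)
  finally show ?thesis unfolding R_def h_def .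
qed

lemma integral_marg_cond_as_mixture:
  assumes c: "c \<notin> F" and x: "\<forall>i\<in>F. x i \<in> {0..<1}"
    and g: "g \<in> borel_measurable (TP (- insert c F))"
    and g_bound: "\<And>z. z \<in> space (TP (- insert c F)) \<Longrightarrow> \<bar>g z\<bar> \<le> C"
  shows "(\<integral>z. g z \<partial>marg (- insert c F) (cond \<rho> F x))
      = (\<integral>s. fibre_integral \<rho> (insert c F) (x(c := s)) g \<partial>T_meas)
        / (\<integral>s. fibre_integral \<rho> (insert c F) (x(c := s)) (\<lambda>_. 1) \<partial>T_meas)"
    and "0 < (\<integral>s. fibre_integral \<rho> (insert c F) (x(c := s)) (\<lambda>_. 1) \<partial>T_meas)"
proof -
  have one: "fibre_integral \<rho> F x (\<lambda>_. 1)
      = (\<integral>s. fibre_integral \<rho> (insert c F) (x(c := s)) (\<lambda>_. 1) \<partial>T_meas)"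
    using fibre_integral_split[OF c x, where g = "\<lambda>_. 1" and C = 1] by simp
  then show "0 < (\<integral>s. fibre_integral \<rho> (insert c F) (x(c := s)) (\<lambda>_. 1) \<partial>T_meas)"
    using fibre_integral_one_pos[OF x] by simp
  have "- insert c F \<subseteq> - F" by auto
  then show "(\<integral>z. g z \<partial>marg (- insert c F) (cond \<rho> F x))
      = (\<integral>s. fibre_integral \<rho> (insert c F) (x(c := s)) g \<partial>T_meas)
        / (\<integral>s. fibre_integral \<rho> (insert c F) (x(c := s)) (\<lambda>_. 1) \<partial>T_meas)"
    using integral_marg_cond[OF _ g] fibre_integral_split[OF c x g g_bound] one by simp
qed

lemma cond_diff_le_B_Osc:
  assumes F: "card F = k" "e \<in> F" and x: "\<forall>i\<in>F. x i \<in> {0..<1}" and s: "s \<in> {0..<1}"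
    and g: "integrable (TP (- F)) g" and osc: "Osc (- F) g = ereal \<omega>"
  shows "ereal ((\<integral>z. g z \<partial>cond \<rho> F x) - (\<integral>z. g z \<partial>cond \<rho> F (x(e := s))))
    \<le> B \<rho> k * Osc (- F) g"
proof (cases "\<omega> = 0")
  case True
  \<comment> \<open>here the difference must vanish exactly, as B \<rho> k may be \<infinity> and \<infinity> * 0 = 0\<close>
  define z0 where "z0 = restrict (\<lambda>_. 0::real) (- F)"
  have "g z = g z0" if "z \<in> space (TP (- F))" for z
    using abs_diff_le_card_Osc[OF osc finite, of z z0] True that by (simp add: space_TP z0_def)
  moreover have "\<forall>i\<in>F. (x(e := s)) i \<in> {0..<1}" using x s by simp
  ultimately show ?thesis
    using integral_cond_eq_const[OF x] integral_cond_eq_const[of F "x(e := s)"] g osc True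
    by (simp add: zero_ereal_def[symmetric])
next
  case False
  then have \<omega>: "0 < \<omega>" using osc Osc_nonneg[of "- F" g] by simp
  let ?D = "(\<integral>z. g z \<partial>cond \<rho> F x) - (\<integral>z. g z \<partial>cond \<rho> F (x(e := s)))"
  have "ereal ((\<integral>z. g z / \<omega> \<partial>cond \<rho> F x) - (\<integral>z. g z / \<omega> \<partial>cond \<rho> F (x(e := s))))
      \<le> B \<rho> k"
    unfolding B_def by (rule Sup_upper) (use F x s divide_Osc_in_Ocl[OF g osc \<omega>] in blast)
  then have "ereal (?D / \<omega>) \<le> B \<rho> k" by (simp add: diff_divide_distrib)
  then have "ereal (?D / \<omega>) * ereal \<omega> \<le> B \<rho> k * ereal \<omega>"
    by (rule ereal_mult_right_mono) (use \<omega> in simp)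
  then show ?thesis using \<omega> osc by simp
qed

lemma marg_cond_diff_le_twice:
  fixes g :: "('n \<Rightarrow> real) \<Rightarrow> real"
  assumes c: "c \<notin> F" and x: "\<forall>i\<in>F. x i \<in> {0..<1}" and d: "d \<in> F" and t: "t \<in> {0..<1}"
    and g: "g \<in> borel_measurable (TP (- insert c F))"
    and g_bound: "\<And>z. z \<in> space (TP (- insert c F)) \<Longrightarrow> \<bar>g z\<bar> \<le> C"
    and step: "\<And>y e s. \<forall>i\<in>insert c F. y i \<in> {0..<1} \<Longrightarrow> e \<in> insert c F \<Longrightarrow> s \<in> {0..<1} \<Longrightarrow>
      (\<integral>z. g z \<partial>cond \<rho> (insert c F) y) - (\<integral>z. g z \<partial>cond \<rho> (insert c F) (y(e := s))) \<le> \<beta>"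
  shows "(\<integral>z. g z \<partial>marg (- insert c F) (cond \<rho> F x))
    - (\<integral>z. g z \<partial>marg (- insert c F) (cond \<rho> F (x(d := t)))) \<le> 2 * \<beta>"
proof -
  define A where "A y s = fibre_integral \<rho> (insert c F) (y(c := s)) g" for y s
  define Z where "Z y s = fibre_integral \<rho> (insert c F) (y(c := s)) (\<lambda>_. 1)" for y s
  have box: "\<forall>i\<in>insert c F. (y(c := s)) i \<in> {0..<1}"
    if "\<forall>i\<in>F. y i \<in> {0..<1}" "s \<in> space T_meas" for y s
    using that by (auto simp: space_T_meas)
  have mixture:
    "(\<integral>z. g z \<partial>marg (- insert c F) (cond \<rho> F y)) = (\<integral>s. A y s \<partial>T_meas) / (\<integral>s. Z y s \<partial>T_meas)"
    "integrable T_meas (A y)" "integrable T_meas (Z y)" "0 < (\<integral>s. Z y s \<partial>T_meas)"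
    if y: "\<forall>i\<in>F. y i \<in> {0..<1}" for y
    unfolding A_def Z_def
    using integral_marg_cond_as_mixture[OF c y g g_bound] integrable_fibre_integral_upd[OF y g g_bound]
      integrable_fibre_integral_upd[OF y, where g = "\<lambda>_. 1" and C = 1]
    by simp_all
  have ratio: "(\<integral>z. g z \<partial>cond \<rho> (insert c F) (y(c := s))) = A y s / Z y s" for y s
    unfolding A_def Z_def using g by (simp add: integral_cond)
  define x' where "x' = x(d := t)"
  have x': "\<forall>i\<in>F. x' i \<in> {0..<1}" using x t unfolding x'_def by simp
  have "(\<integral>s. A x s \<partial>T_meas) / (\<integral>s. Z x s \<partial>T_meas) - (\<integral>s. A x' s \<partial>T_meas) / (\<integral>s. Z x' s \<partial>T_meas)
      \<le> 2 * \<beta>"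
  proof (rule integral_ratio_diff_le[OF mixture(2,3)[OF x] mixture(2,3)[OF x'] _ _ mixture(4)[OF x] mixture(4)[OF x']])
    show "0 < Z x s" "0 < Z x' s" if "s \<in> space T_meas" for s
      unfolding Z_def using fibre_integral_one_pos box[OF x that] box[OF x' that] by auto
    show "A x s / Z x s - A x' s / Z x' s \<le> \<beta>" if s: "s \<in> space T_meas" for s
    proof -
      have upd: "x'(c := s) = (x(c := s))(d := t)" unfolding x'_def using c d by (auto simp: fun_upd_twist)
      have "A x s / Z x s - A x' s / Z x' s
          = (\<integral>z. g z \<partial>cond \<rho> (insert c F) (x(c := s)))
            - (\<integral>z. g z \<partial>cond \<rho> (insert c F) ((x(c := s))(d := t)))"
        by (simp only: ratio[symmetric] upd)
      also have "\<dots> \<le> \<beta>" using d t by (intro step[OF box[OF x s]]) auto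
      finally show ?thesis .
    qed
    show "A x' s / Z x' s - A x' s' / Z x' s' \<le> \<beta>" if "s \<in> space T_meas" "s' \<in> space T_meas" for s s'
    proof -
      have "A x' s / Z x' s - A x' s' / Z x' s'
          = (\<integral>z. g z \<partial>cond \<rho> (insert c F) (x'(c := s)))
            - (\<integral>z. g z \<partial>cond \<rho> (insert c F) ((x'(c := s))(c := s')))"
        by (simp only: ratio[symmetric] fun_upd_upd)
      also have "\<dots> \<le> \<beta>" using that by (intro step[OF box[OF x' that(1)]]) (auto simp: space_T_meas)
      finally show ?thesis .
    qed
  qed
  then show ?thesis using mixture(1)[OF x] mixture(1)[OF x'] unfolding x'_def by linarith
qed


lemma marg_cond_diff_le_B_Osc:
  assumes c: "c \<notin> F" and card: "card (insert c F) = k"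
    and x: "\<forall>i\<in>F. x i \<in> {0..<1}" and d: "d \<in> F" and t: "t \<in> {0..<1}"
    and g: "integrable (TP (- insert c F)) g" and osc: "Osc (- insert c F) g < \<infinity>"
  shows "ereal ((\<integral>z. g z \<partial>marg (- insert c F) (cond \<rho> F x))
      - (\<integral>z. g z \<partial>marg (- insert c F) (cond \<rho> F (x(d := t)))))
    \<le> 2 * B \<rho> k * Osc (- insert c F) g"
proof -
  obtain \<omega> where \<omega>: "Osc (- insert c F) g = ereal \<omega>"
    using osc Osc_nonneg[of "- insert c F" g] by (cases "Osc (- insert c F) g") auto
  define z0 where "z0 = restrict (\<lambda>_. 0::real) (- insert c F)"
  have g_bound: "\<bar>g z\<bar> \<le> \<bar>g z0\<bar> + real (card (- insert c F)) * \<omega>"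
    if "z \<in> space (TP (- insert c F))" for z
    using abs_diff_le_card_Osc[OF \<omega> finite, of z z0] that by (auto simp: space_TP z0_def)
  have step: "ereal ((\<integral>z. g z \<partial>cond \<rho> (insert c F) y) - (\<integral>z. g z \<partial>cond \<rho> (insert c F) (y(e := s))))
      \<le> B \<rho> k * Osc (- insert c F) g"
    if "\<forall>i\<in>insert c F. y i \<in> {0..<1}" "e \<in> insert c F" "s \<in> {0..<1}" for y e s
    by (rule cond_diff_le_B_Osc[OF card that(2,1,3) g \<omega>])
  have "ereal ((\<integral>z. g z \<partial>marg (- insert c F) (cond \<rho> F x))
      - (\<integral>z. g z \<partial>marg (- insert c F) (cond \<rho> F (x(d := t)))))
    \<le> 2 * (B \<rho> k * Osc (- insert c F) g)"
  proof (cases "B \<rho> k * Osc (- insert c F) g")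
    case (real \<beta>)
    have "(\<integral>z. g z \<partial>marg (- insert c F) (cond \<rho> F x))
        - (\<integral>z. g z \<partial>marg (- insert c F) (cond \<rho> F (x(d := t)))) \<le> 2 * \<beta>"
      using g by (intro marg_cond_diff_le_twice[OF c x d t _ g_bound]) (use step real in auto)
    then show ?thesis using real by simp
  next
    case PInf
    show ?thesis unfolding PInf by simp
  next
    case MInf
    have "\<forall>i\<in>insert c F. (\<lambda>_. 0::real) i \<in> {0..<1}" by simp
    then show ?thesis using step[of "\<lambda>_. 0" c 0] MInf by simp
  qed
  then show ?thesis by (simp add: mult.assoc)
qed

end

theorem lemma5p3:
  fixes \<rho> :: "('n::finite \<Rightarrow> real) \<Rightarrow> real"
    and a b K :: real
    and p :: "nat \<Rightarrow> 'n"
    and k j :: nat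
    and x :: "'n \<Rightarrow> real"
    and t :: real
    and \<psi> :: "('n \<Rightarrow> real) \<Rightarrow> real"
  assumes inM: "\<rho> \<in> M a b (K / real CARD('n))"
    and prob: "prob_space (muT \<rho>)"
    and perm: "bij_betw p {1..CARD('n)} UNIV"
    and k: "1 \<le> k" "k \<le> CARD('n)"
    and j: "1 \<le> j" "j \<le> k - 1"
    and x: "\<forall>l\<in>{1..k-1}. x (p l) \<in> {0..<1}"
    and t: "t \<in> {0..<1}"
    and L1: "integrable (TP (p ` {k+1..CARD('n)})) \<psi>"
    and osc: "Osc (p ` {k+1..CARD('n)}) \<psi> < \<infinity>"
  shows "ereal ((\<integral>y. \<psi> y \<partial>marg (p ` {k+1..CARD('n)}) (cond \<rho> (p ` {1..k-1}) x))
              - (\<integral>y. \<psi> y \<partial>marg (p ` {k+1..CARD('n)}) (cond \<rho> (p ` {1..k-1}) (x(p j := t)))))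
         \<le> 2 * B \<rho> k * Osc (p ` {k+1..CARD('n)}) \<psi>"
proof -
  interpret torus_density \<rho> using inM by unfold_locales (auto simp: M_def)
  define F where "F = p ` {1..k-1}"
  define c where "c = p k"
  have c: "c \<notin> F" and R: "p ` {k+1..CARD('n)} = - insert c F" and card: "card (insert c F) = k"
    using bij_betw_split_at[OF perm k] unfolding F_def c_def by auto
  have d: "p j \<in> F" and x: "\<forall>i\<in>F. x i \<in> {0..<1}" using j x unfolding F_def by auto
  show ?thesis
    using marg_cond_diff_le_B_Osc[OF c card x d t] L1 osc unfolding R F_def by simp
qed

end
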